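(* Assume [H-3]. For $0\le t<T$ and $s\in[t,T]$, the resolvent can be written $$R_{s,T}=\mathbb T^\alpha_{T-t}\,\hat R^{t,T}_{\frac{s-t}{T-t}}\,(\mathbb T^\alpha_{T-t})^{-1},$$ where the matrices $\hat R^{t,T}_{u}$, $u\in[0,1]$, are non-degenerate and bounded uniformly in $s\in[t,T]$, with constants depending on $T$.
   Context: $d,n\ge1$, $\alpha\in(0,2)$. $A_t$ is the $nd\times nd$ matrix with $d\times d$ blocks $a^{i,j}_t$, $a^{i,j}_t=0$ if $j<i-1$, measurable and bounded in time. [H-3]: $\underline\alpha|\xi|^2\le\langle a^{i,i-1}_t\xi,\xi\rangle\le\overline\alpha|\xi|^2$ for $\xi\in\mathbb R^d$, $i\in\{2,\dots,n\}$, and $\|a^{i,j}_t\|\le\overline\alpha$. The resolvent solves $\frac{d}{ds}R_{s,T}=A_sR_{s,T}$, $R_{T,T}=I_{nd\times nd}$. $\mathbb T^\alpha_u=\mathrm{Diag}(u^{1/\alpha}I_d,u^{1+1/\alpha}I_d,\dots,u^{n-1+1/\alpha}I_d)$. *)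

theory Defs
  imports "HOL-Analysis.Analysis"
begin

text \<open>Block matrices of size nd x nd are represented as functions
  nat \<Rightarrow> nat \<Rightarrow> real^'d^'d, blocks indexed by i,j in {1..n};
  d = CARD('d).\<close>

type_synonym 'd bmat = "nat \<Rightarrow> nat \<Rightarrow> real^'d^'d"

definition bmul :: "nat \<Rightarrow> 'd::finite bmat \<Rightarrow> 'd bmat \<Rightarrow> 'd bmat" where
  "bmul n X Y = (\<lambda>i j. \<Sum>k\<in>{1..n}. X i k ** Y k j)"

definition bid :: "'d::finite bmat" where
  "bid = (\<lambda>i j. if i = j then mat 1 else 0)"

definition beq :: "nat \<Rightarrow> 'd::finite bmat \<Rightarrow> 'd bmat \<Rightarrow> bool" where
  "beq n X Y \<longleftrightarrow> (\<forall>i\<in>{1..n}. \<forall>j\<in>{1..n}. X i j = Y i j)"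

definition Tscale :: "real \<Rightarrow> real \<Rightarrow> 'd::finite bmat" where
  "Tscale \<alpha> u = (\<lambda>i j. if i = j then (u powr (real i - 1 + 1 / \<alpha>)) *\<^sub>R mat 1 else 0)"

definition Tscale_inv :: "real \<Rightarrow> real \<Rightarrow> 'd::finite bmat" where
  "Tscale_inv \<alpha> u = (\<lambda>i j. if i = j then (u powr (- (real i - 1 + 1 / \<alpha>))) *\<^sub>R mat 1 else 0)"

end

theory Submission
  imports Defs
begin

text \<open>With \<open>\<tau> = T - t\<close>, block \<open>(i,j)\<close> of the rescaled resolvent is
  \<open>\<tau> ^ (j - i) * R (t + u \<tau>) i j\<close>: the exponents \<open>1/\<alpha>\<close> of \<open>\<T>\<^sup>\<alpha>\<close> cancel. On and above
  the diagonal the factor \<open>\<tau> ^ (j - i)\<close> is at most \<open>(1 + T) ^ n\<close>. Below it, \<open>A\<close> is lower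
  Hessenberg, so the integral equation \<open>R s = I - \<integral>\<^sub>s\<^sup>T A r R r dr\<close> expresses block \<open>(i,j)\<close>
  through blocks one step closer to the diagonal; induction on \<open>i - j\<close> gives
  \<open>|R s i j| \<le> K (T - s) ^ (i - j)\<close>, which absorbs \<open>\<tau> ^ (j - i)\<close>. The inverse is the
  rescaled adjoint resolvent \<open>S\<close>, the solution of \<open>S s = I + \<integral>\<^sub>s\<^sup>T S r A r dr\<close> obtained
  by Picard iteration: \<open>S R = I\<close> because the product has zero derivative, \<open>R S = I\<close> by
  Gronwall's inequality applied to \<open>R S - I\<close>, and \<open>S\<close> decays below the diagonal like \<open>R\<close>.\<close>

section \<open>Matrix and block algebra\<close>

lemma norm_vector_matrix_mult_le:
  fixes x :: "real^'m" and B :: "real^'n^'m"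
  shows "norm (x v* B) \<le> norm x * norm B"
proof -
  have "x v* B = (\<Sum>k\<in>UNIV. x $ k *\<^sub>R B $ k)"
    by (simp add: vec_eq_iff vector_matrix_mult_def sum_component)
  then have "norm (x v* B) \<le> (\<Sum>k\<in>UNIV. \<bar>norm (x $ k)\<bar> * \<bar>norm (B $ k)\<bar>)"
    using norm_sum[of "\<lambda>k. x $ k *\<^sub>R B $ k" UNIV] by simp
  also have "\<dots> \<le> L2_set (\<lambda>k. norm (x $ k)) UNIV * L2_set (\<lambda>k. norm (B $ k)) UNIV"
    by (rule L2_set_mult_ineq)
  finally show ?thesis by (simp only: norm_vec_def[of x] norm_vec_def[of B])
qed

lemma norm_matrix_mult_le:
  fixes A :: "real^'n^'m" and B :: "real^'k^'n"
  shows "norm (A ** B) \<le> norm A * norm B"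
proof -
  have row: "(A ** B) $ i = A $ i v* B" for i
    by (simp add: vec_eq_iff matrix_matrix_mult_def vector_matrix_mult_def mult.commute)
  have "norm (A ** B) = L2_set (\<lambda>i. norm (A $ i v* B)) UNIV"
    by (simp only: norm_vec_def[of "A ** B"] row)
  also have "\<dots> \<le> L2_set (\<lambda>i. norm (A $ i) * norm B) UNIV"
    by (intro L2_set_mono norm_vector_matrix_mult_le) simp
  also have "\<dots> = norm A * norm B"
    by (simp only: L2_set_left_distrib[OF norm_ge_zero, symmetric] norm_vec_def[of A])
  finally show ?thesis .
qed

lemma bounded_bilinear_matrix_mult:
  "bounded_bilinear ((**) :: real^'n^'m \<Rightarrow> real^'k^'n \<Rightarrow> real^'k^'m)"
proof (rule bounded_bilinear.intro)
  show "\<exists>K. \<forall>A B. norm ((A::real^'n^'m) ** (B::real^'k^'n)) \<le> norm A * norm B * K"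
    using norm_matrix_mult_le by (metis mult.right_neutral)
qed (auto simp: vec_eq_iff matrix_matrix_mult_def sum.distrib sum_distrib_left
    distrib_left distrib_right mult_ac)

interpretation matrix_mult: bounded_bilinear "(**) :: real^'n^'m \<Rightarrow> real^'k^'n \<Rightarrow> real^'k^'m"
  by (rule bounded_bilinear_matrix_mult)

lemma norm_matrix_le_onorm:
  fixes M :: "real^'n^'m"
  shows "norm M \<le> real CARD('m) * real CARD('n) * onorm ((*v) M)"
proof -
  have "norm M \<le> (\<Sum>i\<in>UNIV. norm (M $ i))"
    unfolding norm_vec_def by (rule L2_set_le_sum) simp
  also have "\<dots> \<le> (\<Sum>i\<in>(UNIV::'m set). \<Sum>j\<in>(UNIV::'n set). onorm ((*v) M))"
    by (intro sum_mono order_trans[OF norm_le_l1_cart] matrix_component_le_onorm)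
  finally show ?thesis by simp
qed

definition bnorm :: "nat \<Rightarrow> 'd::finite bmat \<Rightarrow> real" where
  "bnorm n X = (\<Sum>i\<in>{1..n}. \<Sum>j\<in>{1..n}. norm (X i j))"

lemma bnorm_nonneg: "0 \<le> bnorm n X"
  unfolding bnorm_def by (intro sum_nonneg norm_ge_zero)

lemma norm_block_le_bnorm:
  assumes "i \<in> {1..n}" "j \<in> {1..n}"
  shows "norm (X i j) \<le> bnorm n X"
proof -
  have "norm (X i j) \<le> (\<Sum>j\<in>{1..n}. norm (X i j))"
    by (rule member_le_sum) (use assms in auto)
  also have "\<dots> \<le> bnorm n X"
    unfolding bnorm_def by (rule member_le_sum) (use assms in \<open>auto intro: sum_nonneg\<close>)
  finally show ?thesis .
qed

lemma norm_bmul_le: "norm (bmul n X Y i j) \<le> (\<Sum>k\<in>{1..n}. norm (X i k) * norm (Y k j))"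
  unfolding bmul_def by (intro order_trans[OF norm_sum] sum_mono norm_matrix_mult_le)

lemma bmul_assoc: "bmul n (bmul n X Y) Z = bmul n X (bmul n Y Z)"
  unfolding bmul_def
  by (simp add: matrix_mult.sum_left matrix_mult.sum_right matrix_mul_assoc)
    (subst sum.swap, rule refl)

lemma bmul_uminus_left: "bmul n (\<lambda>i j. - X i j) Y i j = - bmul n X Y i j"
  by (simp add: bmul_def matrix_mult.minus_left sum_negf)

lemma bmul_uminus_right: "bmul n X (\<lambda>i j. - Y i j) i j = - bmul n X Y i j"
  by (simp add: bmul_def matrix_mult.minus_right sum_negf)

lemma bmul_diff_left: "bmul n (\<lambda>i j. X i j - X' i j) Y i j = bmul n X Y i j - bmul n X' Y i j"
  by (simp add: bmul_def matrix_mult.diff_left sum_subtractf)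

lemma bmul_diff_right: "bmul n X (\<lambda>i j. Y i j - Y' i j) i j = bmul n X Y i j - bmul n X Y' i j"
  by (simp add: bmul_def matrix_mult.diff_right sum_subtractf)

lemma bmul_bid_left:
  assumes "i \<in> {1..n}"
  shows "bmul n bid Y i j = Y i j"
proof -
  have "bmul n bid Y i j = (\<Sum>k\<in>{1..n}. if i = k then Y k j else 0)"
    unfolding bmul_def bid_def by (intro sum.cong) auto
  then show ?thesis using assms by simp
qed

lemma bmul_bid_right:
  assumes "j \<in> {1..n}"
  shows "bmul n Y bid i j = Y i j"
proof -
  have "bmul n Y bid i j = (\<Sum>k\<in>{1..n}. if k = j then Y i k else 0)"
    unfolding bmul_def bid_def by (intro sum.cong) auto
  then show ?thesis using assms by simp
qed

lemma norm_bid_le: "norm (bid i j :: real^'d::finite^'d) \<le> norm (mat 1 :: real^'d^'d)"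
  by (simp add: bid_def)

lemma bmul_eq_bid:
  assumes X: "\<And>i j. i \<in> {1..n} \<Longrightarrow> j \<in> {1..n} \<Longrightarrow> X i j = bid i j"
    and Y: "\<And>i j. i \<in> {1..n} \<Longrightarrow> j \<in> {1..n} \<Longrightarrow> Y i j = bid i j"
    and ij: "i \<in> {1..n}" "j \<in> {1..n}"
  shows "bmul n X Y i j = bid i j"
proof -
  have "bmul n X Y i j = bmul n bid bid i j"
    unfolding bmul_def using X Y ij by (intro sum.cong refl) simp
  also have "\<dots> = bid i j" by (rule bmul_bid_left[OF ij(1)])
  finally show ?thesis .
qed

section \<open>Backward integral equations\<close>

definition block_continuous_on :: "nat \<Rightarrow> real set \<Rightarrow> (real \<Rightarrow> 'd::finite bmat) \<Rightarrow> bool" where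
  "block_continuous_on n S X \<longleftrightarrow> (\<forall>i\<in>{1..n}. \<forall>j\<in>{1..n}. continuous_on S (\<lambda>s. X s i j))"

lemma block_continuous_on_subset:
  "block_continuous_on n S X \<Longrightarrow> S' \<subseteq> S \<Longrightarrow> block_continuous_on n S' X"
  unfolding block_continuous_on_def by (meson continuous_on_subset)

lemma block_continuous_on_bmul:
  assumes "block_continuous_on n S X" "block_continuous_on n S Y"
  shows "block_continuous_on n S (\<lambda>s. bmul n (X s) (Y s))"
  using assms unfolding block_continuous_on_def bmul_def
  by (intro ballI continuous_on_sum matrix_mult.continuous_on) auto

lemma block_continuous_on_bounded:
  assumes "block_continuous_on n {a..b} X"
  shows "\<exists>K. \<forall>s\<in>{a..b}. \<forall>i\<in>{1..n}. \<forall>j\<in>{1..n}. norm (X s i j) \<le> K"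
proof -
  have "continuous_on {a..b} (\<lambda>s. bnorm n (X s))"
    using assms unfolding bnorm_def block_continuous_on_def
    by (intro continuous_on_sum continuous_on_norm) auto
  then have "bounded ((\<lambda>s. bnorm n (X s)) ` {a..b})"
    by (intro compact_imp_bounded compact_continuous_image compact_Icc)
  then obtain K where K: "\<And>s. s \<in> {a..b} \<Longrightarrow> norm (bnorm n (X s)) \<le> K"
    unfolding bounded_iff by blast
  have "norm (X s i j) \<le> K" if "s \<in> {a..b}" "i \<in> {1..n}" "j \<in> {1..n}" for s i j
    using norm_block_le_bnorm[OF that(2,3), of "X s"] K[OF that(1)] by simp
  then show ?thesis by blast
qed

definition backward_solution ::
    "nat \<Rightarrow> real \<Rightarrow> (real \<Rightarrow> 'd::finite bmat) \<Rightarrow> (real \<Rightarrow> 'd bmat) \<Rightarrow> bool" where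
  "backward_solution n T X F \<longleftrightarrow>
     (\<forall>s\<in>{0..T}. \<forall>i\<in>{1..n}. \<forall>j\<in>{1..n}. ((\<lambda>r. F r i j) has_integral X T i j - X s i j) {s..T})"

lemma has_integral_norm_le_length:
  fixes f :: "real \<Rightarrow> 'a::real_normed_vector"
  assumes "(f has_integral v) {a..b}" "a \<le> b" "\<And>r. r \<in> {a..b} \<Longrightarrow> norm (f r) \<le> B"
  shows "norm v \<le> B * (b - a)"
proof -
  have "0 \<le> B" using assms(2) assms(3)[of a] by (meson atLeastAtMost_iff norm_ge_zero order.refl order_trans)
  then show ?thesis using has_integral_bound_real[where S="{}", OF _ _ assms(1)] assms by simp
qed

lemma backward_solution_increment:
  assumes X: "backward_solution n T X F" and ab: "0 \<le> a" "a \<le> b" "b \<le> T"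
    and ij: "i \<in> {1..n}" "j \<in> {1..n}"
  shows "((\<lambda>r. F r i j) has_integral X b i j - X a i j) {a..b}"
proof -
  have aT: "((\<lambda>r. F r i j) has_integral X T i j - X a i j) {a..T}"
    using X ab ij unfolding backward_solution_def by simp
  have bT: "((\<lambda>r. F r i j) has_integral X T i j - X b i j) {b..T}"
    using X ab ij unfolding backward_solution_def by simp
  obtain v where v: "((\<lambda>r. F r i j) has_integral v) {a..b}"
    using integrable_on_subinterval[OF has_integral_integrable[OF aT], of a b] ab
    unfolding integrable_on_def by auto
  have "((\<lambda>r. F r i j) has_integral v + (X T i j - X b i j)) {a..T}"
    by (rule has_integral_combine[OF ab(2,3) v bT])
  then have "v + (X T i j - X b i j) = X T i j - X a i j"
    using aT by (rule has_integral_unique)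
  then have "v = X b i j - X a i j"
    by (simp add: algebra_simps)
  then show ?thesis using v by simp
qed

lemma backward_solution_continuous:
  assumes "backward_solution n T X F"
  shows "block_continuous_on n {0..T} X"
  unfolding block_continuous_on_def
proof (intro ballI)
  fix i j assume ij: "i \<in> {1..n}" "j \<in> {1..n}"
  show "continuous_on {0..T} (\<lambda>s. X s i j)"
  proof (cases "0 \<le> T")
    case True
    have F: "((\<lambda>r. F r i j) has_integral X T i j - X 0 i j) {0..T}"
      using assms True ij unfolding backward_solution_def by auto
    have "continuous_on {0..T} (\<lambda>s. X T i j - integral {s..T} (\<lambda>r. F r i j))"
      by (intro continuous_intros indefinite_integral_continuous_1' has_integral_integrable[OF F])
    moreover have "X s i j = X T i j - integral {s..T} (\<lambda>r. F r i j)" if "s \<in> {0..T}" for s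
      using integral_unique[OF backward_solution_increment[OF assms _ _ _ ij, of s T]] that by simp
    ultimately show ?thesis by (metis (no_types, lifting) continuous_on_eq)
  qed simp
qed

lemma backward_solution_shift:
  assumes "backward_solution n T X F"
    and "\<And>s i j. i \<in> {1..n} \<Longrightarrow> j \<in> {1..n} \<Longrightarrow> X' s i j = X s i j - C i j"
    and "\<And>r i j. i \<in> {1..n} \<Longrightarrow> j \<in> {1..n} \<Longrightarrow> F' r i j = F r i j"
  shows "backward_solution n T X' F'"
  using assms unfolding backward_solution_def by simp

lemma block_continuous_on_near:
  assumes X: "block_continuous_on n S X" and x: "x \<in> S" and \<eta>: "0 < \<eta>"
  obtains d where "0 < d"
    "\<And>y i j. y \<in> S \<Longrightarrow> \<bar>y - x\<bar> < d \<Longrightarrow> i \<in> {1..n} \<Longrightarrow> j \<in> {1..n} \<Longrightarrow> norm (X y i j - X x i j) < \<eta>"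
proof -
  have "continuous_on S (\<lambda>y. bnorm n (\<lambda>i j. X y i j - X x i j))"
    using X unfolding bnorm_def block_continuous_on_def
    by (intro continuous_on_sum continuous_on_norm continuous_on_diff continuous_on_const) auto
  moreover have "bnorm n (\<lambda>i j. X x i j - X x i j) = 0" by (simp add: bnorm_def)
  ultimately obtain d where "0 < d" "\<And>y. y \<in> S \<Longrightarrow> \<bar>y - x\<bar> < d \<Longrightarrow> bnorm n (\<lambda>i j. X y i j - X x i j) < \<eta>"
    using x \<eta> bnorm_nonneg unfolding continuous_on_iff dist_real_def by fastforce
  then show ?thesis using that norm_block_le_bnorm le_less_trans by blast
qed

lemma constant_if_locally_flat:
  fixes P :: "real \<Rightarrow> 'a::real_normed_vector"
  assumes flat: "\<And>x e. x \<in> {a..b} \<Longrightarrow> 0 < e \<Longrightarrow>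
      \<exists>d>0. \<forall>y\<in>{a..b}. \<bar>y - x\<bar> < d \<longrightarrow> norm (P y - P x) \<le> e * \<bar>y - x\<bar>"
    and x: "x \<in> {a..b}"
  shows "P x = P b"
proof -
  have "(P has_derivative (\<lambda>h. 0)) (at x within {a..b})" if "x \<in> {a..b}" for x
    unfolding has_derivative_within_alt by (simp add: flat[OF that])
  then obtain c where "\<forall>x\<in>{a..b}. P x = c"
    using has_derivative_zero_constant[of "{a..b}" P] by auto
  then show ?thesis using x by auto
qed

lemma bmul_backward_increment:
  assumes X: "backward_solution n T X F" and Y: "backward_solution n T Y H"
    and ab: "0 \<le> a" "a \<le> b" "b \<le> T" and ij: "i \<in> {1..n}" "j \<in> {1..n}"
  defines "G \<equiv> \<lambda>r. bmul n (F r) (Y r) i j + bmul n (X r) (H r) i j"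
  assumes G_integrable: "G integrable_on {0..T}"
  defines "P \<equiv> \<lambda>s. bmul n (X s) (Y s) i j + integral {s..T} G"
  shows "((\<lambda>r. bmul n (F r) (\<lambda>k l. Y b k l - Y r k l) i j + bmul n (\<lambda>l k. X a l k - X r l k) (H r) i j)
           has_integral P b - P a) {a..b}"
proof -
  have product: "((\<lambda>r. bmul n (F r) (Y b) i j + bmul n (X a) (H r) i j) has_integral
      bmul n (X b) (Y b) i j - bmul n (X a) (Y a) i j) {a..b}"
  proof -
    have "((\<lambda>r. \<Sum>k\<in>{1..n}. F r i k ** Y b k j + X a i k ** H r k j) has_integral
        (\<Sum>k\<in>{1..n}. (X b i k - X a i k) ** Y b k j + X a i k ** (Y b k j - Y a k j))) {a..b}"
    proof (rule has_integral_sum, simp)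
      fix k assume k: "k \<in> {1..n}"
      show "((\<lambda>r. F r i k ** Y b k j + X a i k ** H r k j) has_integral
          (X b i k - X a i k) ** Y b k j + X a i k ** (Y b k j - Y a k j)) {a..b}"
        by (intro has_integral_add
            has_integral_linear[OF backward_solution_increment[OF X ab ij(1) k]
              matrix_mult.bounded_linear_left, unfolded o_def]
            has_integral_linear[OF backward_solution_increment[OF Y ab k ij(2)]
              matrix_mult.bounded_linear_right, unfolded o_def])
    qed
    moreover have "(\<Sum>k\<in>{1..n}. (X b i k - X a i k) ** Y b k j + X a i k ** (Y b k j - Y a k j))
        = bmul n (X b) (Y b) i j - bmul n (X a) (Y a) i j"
      by (simp add: bmul_def matrix_mult.diff_left matrix_mult.diff_right sum_subtractf[symmetric])
    ultimately show ?thesis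
      by (simp add: bmul_def sum.distrib)
  qed
  have G: "(G has_integral integral {a..T} G - integral {b..T} G) {a..b}"
  proof -
    have "G integrable_on {a..T}" by (rule integrable_on_subinterval[OF G_integrable]) (use ab in auto)
    then have "integral {a..b} G + integral {b..T} G = integral {a..T} G"
      by (rule Henstock_Kurzweil_Integration.integral_combine[OF ab(2,3)])
    moreover have "G integrable_on {a..b}" by (rule integrable_on_subinterval[OF G_integrable]) (use ab in auto)
    ultimately show ?thesis by (metis add_diff_cancel_right' integrable_integral)
  qed
  have "bmul n (X b) (Y b) i j - bmul n (X a) (Y a) i j - (integral {a..T} G - integral {b..T} G)
      = P b - P a"
    unfolding P_def by (simp add: algebra_simps)
  then have "((\<lambda>r. bmul n (F r) (Y b) i j + bmul n (X a) (H r) i j - G r) has_integral P b - P a) {a..b}"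
    using has_integral_diff[OF product G] by simp
  moreover have "bmul n (F r) (Y b) i j + bmul n (X a) (H r) i j - G r
      = bmul n (F r) (\<lambda>k l. Y b k l - Y r k l) i j + bmul n (\<lambda>l k. X a l k - X r l k) (H r) i j" for r
    by (simp add: G_def bmul_def matrix_mult.diff_left matrix_mult.diff_right sum_subtractf)
  ultimately show ?thesis by simp
qed

lemma bmul_backward_increment_le:
  assumes X: "backward_solution n T X F" and Y: "backward_solution n T Y H"
    and ab: "0 \<le> a" "a \<le> b" "b \<le> T" and ij: "i \<in> {1..n}" "j \<in> {1..n}"
    and F_bounded: "\<And>r k. r \<in> {a..b} \<Longrightarrow> k \<in> {1..n} \<Longrightarrow> norm (F r i k) \<le> M"
    and H_bounded: "\<And>r k. r \<in> {a..b} \<Longrightarrow> k \<in> {1..n} \<Longrightarrow> norm (H r k j) \<le> M"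
    and X_near: "\<And>r k. r \<in> {a..b} \<Longrightarrow> k \<in> {1..n} \<Longrightarrow> norm (X a i k - X r i k) \<le> \<eta>"
    and Y_near: "\<And>r k. r \<in> {a..b} \<Longrightarrow> k \<in> {1..n} \<Longrightarrow> norm (Y b k j - Y r k j) \<le> \<eta>"
  defines "G \<equiv> \<lambda>r. bmul n (F r) (Y r) i j + bmul n (X r) (H r) i j"
  assumes G_integrable: "G integrable_on {0..T}"
  defines "P \<equiv> \<lambda>s. bmul n (X s) (Y s) i j + integral {s..T} G"
  shows "norm (P b - P a) \<le> 2 * real n * M * \<eta> * (b - a)"
proof -
  have "((\<lambda>r. bmul n (F r) (\<lambda>k l. Y b k l - Y r k l) i j + bmul n (\<lambda>l k. X a l k - X r l k) (H r) i j)
      has_integral P b - P a) {a..b}"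
    using bmul_backward_increment[OF X Y ab ij G_integrable[unfolded G_def]] unfolding P_def G_def .
  from this ab(2) show ?thesis
  proof (rule has_integral_norm_le_length)
  fix r assume r: "r \<in> {a..b}"
  have "0 \<le> M" "0 \<le> \<eta>"
    using F_bounded[OF r ij(1)] X_near[OF r ij(1)] by (auto intro: order_trans[OF norm_ge_zero])
  then have "norm (bmul n (F r) (\<lambda>k l. Y b k l - Y r k l) i j) \<le> (\<Sum>k\<in>{1..n}. M * \<eta>)"
    and "norm (bmul n (\<lambda>l k. X a l k - X r l k) (H r) i j) \<le> (\<Sum>k\<in>{1..n}. \<eta> * M)"
    using F_bounded[OF r] Y_near[OF r] H_bounded[OF r] X_near[OF r]
    by (intro order_trans[OF norm_bmul_le] sum_mono mult_mono; simp)+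
  moreover have "2 * real n * M * \<eta> = (\<Sum>k\<in>{1..n}. M * \<eta>) + (\<Sum>k\<in>{1..n}. \<eta> * M)"
    by simp
  ultimately show "norm (bmul n (F r) (\<lambda>k l. Y b k l - Y r k l) i j
      + bmul n (\<lambda>l k. X a l k - X r l k) (H r) i j) \<le> 2 * real n * M * \<eta>"
    using norm_triangle_ineq[of "bmul n (F r) (\<lambda>k l. Y b k l - Y r k l) i j"
        "bmul n (\<lambda>l k. X a l k - X r l k) (H r) i j"] by linarith
  qed
qed

text \<open>Blockwise, \<open>P s = (X s Y s) i j + \<integral>\<^sub>s\<^sup>T (F Y + X H) i j\<close> has increments
  \<open>o(b - a)\<close> by the previous lemma and continuity of \<open>X\<close> and \<open>Y\<close>, so it is constant.\<close>

lemma backward_solution_bmul: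
  assumes X: "backward_solution n T X F" and Y: "backward_solution n T Y H"
    and M: "0 \<le> M"
    and F_bounded: "\<And>r i j. r \<in> {0..T} \<Longrightarrow> i \<in> {1..n} \<Longrightarrow> j \<in> {1..n} \<Longrightarrow> norm (F r i j) \<le> M"
    and H_bounded: "\<And>r i j. r \<in> {0..T} \<Longrightarrow> i \<in> {1..n} \<Longrightarrow> j \<in> {1..n} \<Longrightarrow> norm (H r i j) \<le> M"
    and integrable: "\<And>i j. i \<in> {1..n} \<Longrightarrow> j \<in> {1..n} \<Longrightarrow>
      (\<lambda>r. bmul n (F r) (Y r) i j + bmul n (X r) (H r) i j) integrable_on {0..T}"
  shows "backward_solution n T (\<lambda>s. bmul n (X s) (Y s))
           (\<lambda>r i j. bmul n (F r) (Y r) i j + bmul n (X r) (H r) i j)"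
  unfolding backward_solution_def
proof (intro ballI)
  fix s i j assume s: "s \<in> {0..T}" and ij: "i \<in> {1..n}" "j \<in> {1..n}"
  define G where "G r = bmul n (F r) (Y r) i j + bmul n (X r) (H r) i j" for r
  define P where "P s = bmul n (X s) (Y s) i j + integral {s..T} G" for s
  have "\<exists>d>0. \<forall>y\<in>{0..T}. \<bar>y - x\<bar> < d \<longrightarrow> norm (P y - P x) \<le> e * \<bar>y - x\<bar>"
    if x: "x \<in> {0..T}" and e: "0 < e" for x e
  proof -
    define \<eta> where "\<eta> = e / (4 * real n * M + 1)"
    have "0 < 4 * real n * M + 1" using M by (simp add: add_nonneg_pos)
    then have \<eta>: "0 < \<eta>" "4 * real n * M * \<eta> \<le> e"
      using e by (simp_all add: \<eta>_def divide_simps)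
    obtain dX dY where "0 < dX" "0 < dY"
      and near: "\<And>y i j. y \<in> {0..T} \<Longrightarrow> \<bar>y - x\<bar> < dX \<Longrightarrow> i \<in> {1..n} \<Longrightarrow> j \<in> {1..n} \<Longrightarrow>
          norm (X y i j - X x i j) < \<eta>"
        "\<And>y i j. y \<in> {0..T} \<Longrightarrow> \<bar>y - x\<bar> < dY \<Longrightarrow> i \<in> {1..n} \<Longrightarrow> j \<in> {1..n} \<Longrightarrow>
          norm (Y y i j - Y x i j) < \<eta>"
      using block_continuous_on_near[OF backward_solution_continuous[OF X] x \<eta>(1)]
        block_continuous_on_near[OF backward_solution_continuous[OF Y] x \<eta>(1)] by metis
    show ?thesis
    proof (intro exI[of _ "min dX dY"] conjI ballI impI)
      fix y assume y: "y \<in> {0..T}" and yx: "\<bar>y - x\<bar> < min dX dY"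
      define a b where "a = min x y" and "b = max x y"
      have ab: "0 \<le> a" "a \<le> b" "b \<le> T" using x y by (auto simp: a_def b_def)
      have close: "r \<in> {0..T}" "\<bar>r - x\<bar> < dX" "\<bar>r - x\<bar> < dY" if "r \<in> {a..b}" for r
        using that x y yx by (auto simp: a_def b_def)
      have oscillation: "norm (Z p k l - Z r k l) \<le> 2 * \<eta>"
        if "\<And>y. y \<in> {a..b} \<Longrightarrow> k \<in> {1..n} \<Longrightarrow> l \<in> {1..n} \<Longrightarrow> norm (Z y k l - Z x k l) < \<eta>"
          "p \<in> {a..b}" "r \<in> {a..b}" "k \<in> {1..n}" "l \<in> {1..n}" for Z :: "real \<Rightarrow> 'a bmat" and p r k l
        using norm_triangle_ineq4[of "Z p k l - Z x k l" "Z r k l - Z x k l"]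
          that(1)[OF that(2,4,5)] that(1)[OF that(3,4,5)] by simp
      have "norm (P b - P a) \<le> 2 * real n * M * (2 * \<eta>) * (b - a)"
        unfolding P_def G_def using ab ij integrable[OF ij] F_bounded H_bounded close
        by (intro bmul_backward_increment_le[OF X Y]) (auto intro!: oscillation near)
      also have "\<dots> \<le> e * (b - a)" using \<eta>(2) ab by (intro mult_right_mono) auto
      finally show "norm (P y - P x) \<le> e * \<bar>y - x\<bar>"
        by (cases "x \<le> y") (simp_all add: a_def b_def norm_minus_commute)
    qed (use \<open>0 < dX\<close> \<open>0 < dY\<close> in simp)
  qed
  then have "P s = P T" by (rule constant_if_locally_flat[OF _ s]) auto
  then have "integral {s..T} G = bmul n (X T) (Y T) i j - bmul n (X s) (Y s) i j"
    by (simp add: P_def algebra_simps)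
  moreover have "G integrable_on {s..T}"
    unfolding G_def using s by (intro integrable_on_subinterval[OF integrable[OF ij]]) auto
  ultimately have "(G has_integral bmul n (X T) (Y T) i j - bmul n (X s) (Y s) i j) {s..T}"
    by (metis integrable_integral)
  then show "((\<lambda>r. bmul n (F r) (Y r) i j + bmul n (X r) (H r) i j) has_integral
      bmul n (X T) (Y T) i j - bmul n (X s) (Y s) i j) {s..T}"
    unfolding G_def .
qed

section \<open>Gronwall's inequality and decay below the diagonal\<close>

lemma has_integral_power_diff:
  assumes "s \<le> (b::real)"
  shows "((\<lambda>r. (b - r) ^ k) has_integral (b - s) ^ Suc k / real (Suc k)) {s..b}"
proof -
  define G where "G r = - ((b - r) ^ Suc k / real (Suc k))" for r
  have "((\<lambda>r. (b - r) ^ k) has_integral G b - G s) {s..b}"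
  proof (rule fundamental_theorem_of_calculus[OF assms])
    fix x assume "x \<in> {s..b}"
    show "(G has_vector_derivative (b - x) ^ k) (at x within {s..b})"
      unfolding G_def has_real_derivative_iff_has_vector_derivative[symmetric]
      by (auto intro!: derivative_eq_intros) (cases k, simp_all add: field_simps)
  qed
  then show ?thesis by (simp add: G_def)
qed

lemma gronwall_backward_zero:
  fixes \<phi> :: "real \<Rightarrow> real"
  assumes cont: "continuous_on {a..b} \<phi>" and nonneg: "\<And>s. s \<in> {a..b} \<Longrightarrow> 0 \<le> \<phi> s"
    and c: "0 \<le> c" and ineq: "\<And>s. s \<in> {a..b} \<Longrightarrow> \<phi> s \<le> c * integral {s..b} \<phi>"
    and s: "s \<in> {a..b}"
  shows "\<phi> s = 0"
proof -
  have "bounded (\<phi> ` {a..b})"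
    by (intro compact_imp_bounded compact_continuous_image[OF cont] compact_Icc)
  then obtain M where "\<forall>x\<in>\<phi> ` {a..b}. norm x \<le> M"
    unfolding bounded_iff by blast
  then have M: "\<And>s. s \<in> {a..b} \<Longrightarrow> \<phi> s \<le> M"
    by (metis abs_le_D1 image_eqI real_norm_def)
  have iterate: "\<phi> s \<le> M * (c * (b - s)) ^ k / fact k" if "s \<in> {a..b}" for s k
    using that
  proof (induction k arbitrary: s)
    case 0
    then show ?case using M by simp
  next
    case (Suc k)
    let ?h = "\<lambda>r. M * c ^ k / fact k * (b - r) ^ k"
    have h: "(?h has_integral M * c ^ k / fact k * ((b - s) ^ Suc k / real (Suc k))) {s..b}"
      using has_integral_power_diff Suc.prems by (intro has_integral_mult_right) auto
    have "integral {s..b} \<phi> \<le> M * c ^ k / fact k * ((b - s) ^ Suc k / real (Suc k))"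
    proof (rule has_integral_le[OF _ h])
      show "(\<phi> has_integral integral {s..b} \<phi>) {s..b}"
        using Suc.prems by (intro integrable_integral integrable_continuous_interval
            continuous_on_subset[OF cont]) auto
      show "\<phi> r \<le> ?h r" if "r \<in> {s..b}" for r
        using Suc.IH[of r] that Suc.prems by (simp add: power_mult_distrib)
    qed
    then have "c * integral {s..b} \<phi> \<le> c * (M * c ^ k / fact k * ((b - s) ^ Suc k / real (Suc k)))"
      using c by (rule mult_left_mono)
    also have "\<dots> = M * (c * (b - s)) ^ Suc k / fact (Suc k)"
      unfolding fact_Suc power_mult_distrib power_Suc[of c]
      by (simp add: mult_ac del: power_Suc of_nat_Suc)
    finally show ?case using ineq[OF Suc.prems] by linarith
  qed
  have "(\<lambda>k. M * (inverse (fact k) * (c * (b - s)) ^ k)) \<longlonglongrightarrow> M * 0"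
    by (intro tendsto_mult tendsto_const summable_LIMSEQ_zero[OF summable_exp])
  then have "\<phi> s \<le> M * 0"
    by (rule LIMSEQ_le_const) (use iterate[OF s] in \<open>auto simp: field_simps\<close>)
  then show ?thesis using nonneg[OF s] by simp
qed

lemma backward_solution_zero:
  assumes D: "backward_solution n T D F" and D_T: "\<And>i j. i \<in> {1..n} \<Longrightarrow> j \<in> {1..n} \<Longrightarrow> D T i j = 0"
    and L: "0 \<le> L"
    and F_le: "\<And>r i j. r \<in> {0..T} \<Longrightarrow> i \<in> {1..n} \<Longrightarrow> j \<in> {1..n} \<Longrightarrow> norm (F r i j) \<le> L * bnorm n (D r)"
    and s: "s \<in> {0..T}" and ij: "i \<in> {1..n}" "j \<in> {1..n}"
  shows "D s i j = 0"
proof -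
  define \<phi> where "\<phi> r = bnorm n (D r)" for r
  have \<phi>_cont: "continuous_on {0..T} \<phi>"
    using backward_solution_continuous[OF D]
    unfolding \<phi>_def bnorm_def block_continuous_on_def
    by (intro continuous_on_sum continuous_on_norm) auto
  have block: "norm (D s i j) \<le> L * integral {s..T} \<phi>"
    if s: "s \<in> {0..T}" and ij: "i \<in> {1..n}" "j \<in> {1..n}" for s i j
  proof -
    have F: "((\<lambda>r. F r i j) has_integral - D s i j) {s..T}"
      using D s ij D_T unfolding backward_solution_def by fastforce
    have "norm (- D s i j) \<le> integral {s..T} (\<lambda>r. L * \<phi> r)"
    proof (rule integral_norm_bound_integral[OF has_integral_integrable[OF F], unfolded integral_unique[OF F]])
      show "(\<lambda>r. L * \<phi> r) integrable_on {s..T}"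
        using s by (intro integrable_continuous_interval continuous_intros continuous_on_subset[OF \<phi>_cont]) auto
      show "norm (F r i j) \<le> L * \<phi> r" if "r \<in> {s..T}" for r
        using F_le[of r i j] that s ij unfolding \<phi>_def by simp
    qed
    then show ?thesis by simp
  qed
  have "\<phi> s = 0"
  proof (rule gronwall_backward_zero[OF \<phi>_cont _ _ _ s])
    show "0 \<le> real n * real n * L" using L by simp
    show "0 \<le> \<phi> r" for r unfolding \<phi>_def by (rule bnorm_nonneg)
    fix r assume r: "r \<in> {0..T}"
    have "\<phi> r \<le> (\<Sum>i\<in>{1..n}. \<Sum>j\<in>{1..n}. L * integral {r..T} \<phi>)"
      unfolding \<phi>_def[of r] bnorm_def using block[OF r] by (intro sum_mono) auto
    then show "\<phi> r \<le> real n * real n * L * integral {r..T} \<phi>" by (simp add: mult_ac)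
  qed
  then show ?thesis using norm_block_le_bnorm[OF ij, of "D s"] unfolding \<phi>_def by simp
qed

text \<open>Each use of \<open>step\<close> gains a factor \<open>T - s\<close>: below the diagonal, block \<open>(i,j)\<close> is
  controlled by blocks \<open>(a,b)\<close> with \<open>a - b \<ge> i - j - 1\<close>.\<close>

lemma offdiagonal_decay_upto:
  fixes F :: "real \<Rightarrow> 'd::finite bmat"
  assumes bounded: "\<And>s i j. s \<in> {0..T} \<Longrightarrow> i \<in> {1..n} \<Longrightarrow> j \<in> {1..n} \<Longrightarrow> norm (F s i j) \<le> K0"
    and step: "\<And>s i j B. s \<in> {0..T} \<Longrightarrow> i \<in> {1..n} \<Longrightarrow> j \<in> {1..n} \<Longrightarrow> j < i \<Longrightarrow>
      (\<And>r a b. r \<in> {s..T} \<Longrightarrow> a \<in> {1..n} \<Longrightarrow> b \<in> {1..n} \<Longrightarrow> i + b \<le> a + j + 1 \<Longrightarrow> norm (F r a b) \<le> B) \<Longrightarrow>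
      norm (F s i j) \<le> L * B * (T - s)"
  shows "\<exists>K\<ge>0. \<forall>s\<in>{0..T}. \<forall>i\<in>{1..n}. \<forall>j\<in>{1..n}. norm (F s i j) \<le> K * (T - s) ^ min (i - j) m"
proof (induction m)
  case 0
  show ?case using bounded by (intro exI[of _ "max K0 0"]) (auto intro: max.coboundedI1)
next
  case (Suc m)
  then obtain K where K: "K \<ge> 0"
    and F_le: "\<And>s i j. s \<in> {0..T} \<Longrightarrow> i \<in> {1..n} \<Longrightarrow> j \<in> {1..n} \<Longrightarrow>
      norm (F s i j) \<le> K * (T - s) ^ min (i - j) m"
    by blast
  have "norm (F s i j) \<le> max K (L * K) * (T - s) ^ min (i - j) (Suc m)"
    if s: "s \<in> {0..T}" and ij: "i \<in> {1..n}" "j \<in> {1..n}" for s i j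
  proof (cases "i - j \<le> m")
    case True
    have "K * (T - s) ^ (i - j) \<le> max K (L * K) * (T - s) ^ (i - j)"
      using s by (intro mult_right_mono) auto
    then show ?thesis using F_le[OF s ij] True by (simp add: min_absorb1)
  next
    case False
    have "norm (F s i j) \<le> L * (K * (T - s) ^ m) * (T - s)"
    proof (rule step[OF s ij])
      show "j < i" using False by simp
      fix r a b assume r: "r \<in> {s..T}" and ab: "a \<in> {1..n}" "b \<in> {1..n}" and "i + b \<le> a + j + 1"
      then have "min (a - b) m = m" using False by simp
      then have "norm (F r a b) \<le> K * (T - r) ^ m" using F_le[OF _ ab, of r] r s by simp
      also have "\<dots> \<le> K * (T - s) ^ m" using r K by (intro mult_left_mono power_mono) auto
      finally show "norm (F r a b) \<le> K * (T - s) ^ m" .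
    qed
    also have "\<dots> = L * K * (T - s) ^ Suc m" by (simp add: mult_ac)
    also have "\<dots> \<le> max K (L * K) * (T - s) ^ Suc m"
      using s by (intro mult_right_mono) auto
    also have "\<dots> = max K (L * K) * (T - s) ^ min (i - j) (Suc m)"
      using False by (simp add: min_absorb2)
    finally show ?thesis .
  qed
  then show ?case using K by (intro exI[of _ "max K (L * K)"]) auto
qed

lemma offdiagonal_decay:
  fixes F :: "real \<Rightarrow> 'd::finite bmat"
  assumes bounded: "\<And>s i j. s \<in> {0..T} \<Longrightarrow> i \<in> {1..n} \<Longrightarrow> j \<in> {1..n} \<Longrightarrow> norm (F s i j) \<le> K0"
    and step: "\<And>s i j B. s \<in> {0..T} \<Longrightarrow> i \<in> {1..n} \<Longrightarrow> j \<in> {1..n} \<Longrightarrow> j < i \<Longrightarrow>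
      (\<And>r a b. r \<in> {s..T} \<Longrightarrow> a \<in> {1..n} \<Longrightarrow> b \<in> {1..n} \<Longrightarrow> i + b \<le> a + j + 1 \<Longrightarrow> norm (F r a b) \<le> B) \<Longrightarrow>
      norm (F s i j) \<le> L * B * (T - s)"
  shows "\<exists>K. \<forall>s\<in>{0..T}. \<forall>i\<in>{1..n}. \<forall>j\<in>{1..n}. norm (F s i j) \<le> K * (T - s) ^ (i - j)"
proof -
  obtain K where "\<forall>s\<in>{0..T}. \<forall>i\<in>{1..n}. \<forall>j\<in>{1..n}. norm (F s i j) \<le> K * (T - s) ^ min (i - j) n"
    using offdiagonal_decay_upto[where F = F and m = n, OF bounded step] by blast
  moreover have "min (i - j) n = i - j" if "i \<in> {1..n}" for i j :: nat using that by auto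
  ultimately show ?thesis by auto
qed

section \<open>The adjoint resolvent\<close>

lemma integrable_matrix_mult_continuous_bounded:
  fixes X C :: "real \<Rightarrow> real^'d^'d"
  assumes X: "continuous_on {a..b} X" and C: "C \<in> borel_measurable lborel"
    and C_bounded: "\<And>r. r \<in> {a..b} \<Longrightarrow> norm (C r) \<le> L"
  shows "(\<lambda>r. X r ** C r) integrable_on {a..b}" and "(\<lambda>r. C r ** X r) integrable_on {a..b}"
proof -
  have C': "C \<in> borel_measurable (lebesgue_on {a..b})"
    using C by (metis measurable_completion measurable_restrict_space1)
  have "bounded (C ` {a..b})" using C_bounded unfolding bounded_iff by blast
  note product = absolutely_integrable_bounded_measurable_product[OF _ C' _ this
      absolutely_integrable_continuous_real[OF X]]
  have "(\<lambda>r. X r ** C r) absolutely_integrable_on {a..b}"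
    using product[OF bounded_bilinear.flip[OF bounded_bilinear_matrix_mult,
        unfolded bilinear_conv_bounded_bilinear[symmetric]]] by simp
  then show "(\<lambda>r. X r ** C r) integrable_on {a..b}"
    by (rule absolutely_integrable_on_def[THEN iffD1, THEN conjunct1])
  have "(\<lambda>r. C r ** X r) absolutely_integrable_on {a..b}"
    using product[OF bounded_bilinear_matrix_mult[unfolded bilinear_conv_bounded_bilinear[symmetric]]]
    by simp
  then show "(\<lambda>r. C r ** X r) integrable_on {a..b}"
    by (rule absolutely_integrable_on_def[THEN iffD1, THEN conjunct1])
qed

locale bounded_block_coefficients =
  fixes n :: nat and T L :: real and A :: "real \<Rightarrow> 'd::finite bmat"
  assumes T_nonneg: "0 \<le> T" and L_nonneg: "0 \<le> L"
    and A_measurable: "\<And>i j. (\<lambda>s. A s i j) \<in> borel_measurable lborel"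
    and A_bounded: "\<And>s i j. s \<in> {0..T} \<Longrightarrow> i \<in> {1..n} \<Longrightarrow> j \<in> {1..n} \<Longrightarrow> norm (A s i j) \<le> L"
begin

lemma integrable_bmul_coefficient:
  assumes X: "block_continuous_on n {a..b} X" and ab: "0 \<le> a" "b \<le> T"
    and ij: "i \<in> {1..n}" "j \<in> {1..n}"
  shows "(\<lambda>r. bmul n (X r) (A r) i j) integrable_on {a..b}"
    and "(\<lambda>r. bmul n (A r) (X r) i j) integrable_on {a..b}"
proof -
  have "(\<lambda>r. X r i k ** A r k j) integrable_on {a..b}" "(\<lambda>r. A r i k ** X r k j) integrable_on {a..b}"
    if k: "k \<in> {1..n}" for k
  proof -
    have bounded: "norm (A r l m) \<le> L" if "r \<in> {a..b}" "l \<in> {1..n}" "m \<in> {1..n}" for r l m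
      using A_bounded that ab by auto
    show "(\<lambda>r. X r i k ** A r k j) integrable_on {a..b}"
      using X ij k unfolding block_continuous_on_def
      by (intro integrable_matrix_mult_continuous_bounded(1)[OF _ A_measurable bounded]) auto
    show "(\<lambda>r. A r i k ** X r k j) integrable_on {a..b}"
      using X ij k unfolding block_continuous_on_def
      by (intro integrable_matrix_mult_continuous_bounded(2)[OF _ A_measurable bounded]) auto
  qed
  then show "(\<lambda>r. bmul n (X r) (A r) i j) integrable_on {a..b}"
    and "(\<lambda>r. bmul n (A r) (X r) i j) integrable_on {a..b}"
    unfolding bmul_def by (auto intro: integrable_sum)
qed

lemma norm_bmul_coefficient_le:
  assumes r: "r \<in> {0..T}" and ij: "i \<in> {1..n}" "j \<in> {1..n}"
  shows "(\<And>k. k \<in> {1..n} \<Longrightarrow> norm (X i k) \<le> B) \<Longrightarrow> norm (bmul n X (A r) i j) \<le> n * L * B"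
    and "(\<And>k. k \<in> {1..n} \<Longrightarrow> norm (X k j) \<le> B) \<Longrightarrow> norm (bmul n (A r) X i j) \<le> n * L * B"
proof -
  assume X: "\<And>k. k \<in> {1..n} \<Longrightarrow> norm (X i k) \<le> B"
  have "norm (bmul n X (A r) i j) \<le> (\<Sum>k\<in>{1..n}. B * L)"
    using X A_bounded[OF r _ ij(2)] L_nonneg
    by (intro order_trans[OF norm_bmul_le] sum_mono mult_mono) (auto intro: order_trans[OF norm_ge_zero])
  then show "norm (bmul n X (A r) i j) \<le> n * L * B" by (simp add: mult_ac)
next
  assume X: "\<And>k. k \<in> {1..n} \<Longrightarrow> norm (X k j) \<le> B"
  have "norm (bmul n (A r) X i j) \<le> (\<Sum>k\<in>{1..n}. L * B)"
    using X A_bounded[OF r ij(1)] L_nonneg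
    by (intro order_trans[OF norm_bmul_le] sum_mono mult_mono) auto
  then show "norm (bmul n (A r) X i j) \<le> n * L * B" by (simp add: mult_ac)
qed

primrec adjoint_picard :: "nat \<Rightarrow> real \<Rightarrow> 'd bmat" where
  "adjoint_picard 0 = (\<lambda>s. bid)"
| "adjoint_picard (Suc k) = (\<lambda>s i j. integral {s..T} (\<lambda>r. bmul n (adjoint_picard k r) (A r) i j))"

lemma adjoint_picard_continuous: "block_continuous_on n {0..T} (adjoint_picard k)"
proof (induction k)
  case (Suc k)
  have "continuous_on {0..T} (\<lambda>s. integral {s..T} (\<lambda>r. bmul n (adjoint_picard k r) (A r) i j))"
    if "i \<in> {1..n}" "j \<in> {1..n}" for i j
    by (intro indefinite_integral_continuous_1' integrable_bmul_coefficient(1)[OF Suc.IH]) (use that in auto)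
  then show ?case by (simp add: block_continuous_on_def)
qed (simp add: block_continuous_on_def)

lemma integrable_adjoint_picard_coefficient:
  assumes "s \<in> {0..T}" "i \<in> {1..n}" "j \<in> {1..n}"
  shows "(\<lambda>r. bmul n (adjoint_picard k r) (A r) i j) integrable_on {s..T}"
  using assms
  by (intro integrable_bmul_coefficient(1)[OF block_continuous_on_subset[OF adjoint_picard_continuous]]) auto

lemma adjoint_picard_bounded:
  assumes "s \<in> {0..T}" "i \<in> {1..n}" "j \<in> {1..n}"
  shows "norm (adjoint_picard k s i j) \<le> norm (mat 1 :: real^'d^'d) * (n * L * (T - s)) ^ k / fact k"
  using assms
proof (induction k arbitrary: s i j)
  case 0
  then show ?case by (simp add: norm_bid_le)
next
  case (Suc k)
  define c where "c = norm (mat 1 :: real^'d^'d) * (n * L) ^ Suc k / fact k"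
  have h: "((\<lambda>r. c * (T - r) ^ k) has_integral c * ((T - s) ^ Suc k / real (Suc k))) {s..T}"
    using Suc.prems by (intro has_integral_mult_right has_integral_power_diff) auto
  have "norm (adjoint_picard (Suc k) s i j) \<le> integral {s..T} (\<lambda>r. c * (T - r) ^ k)"
    unfolding adjoint_picard.simps
  proof (rule integral_norm_bound_integral[OF integrable_adjoint_picard_coefficient[OF Suc.prems]])
    show "(\<lambda>r. c * (T - r) ^ k) integrable_on {s..T}" using h by blast
    fix r assume r: "r \<in> {s..T}"
    then have "norm (bmul n (adjoint_picard k r) (A r) i j)
        \<le> n * L * (norm (mat 1 :: real^'d^'d) * (n * L * (T - r)) ^ k / fact k)"
      using Suc.prems by (intro norm_bmul_coefficient_le(1) Suc.IH) auto
    then show "norm (bmul n (adjoint_picard k r) (A r) i j) \<le> c * (T - r) ^ k"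
      by (simp add: c_def power_mult_distrib mult_ac)
  qed
  also have "\<dots> = c * ((T - s) ^ Suc k / real (Suc k))"
    by (rule integral_unique[OF h])
  also have "\<dots> = norm (mat 1 :: real^'d^'d) * (n * L * (T - s)) ^ Suc k / fact (Suc k)"
    unfolding c_def fact_Suc power_mult_distrib
    by (simp add: mult_ac del: power_Suc of_nat_Suc)
  finally show ?case .
qed

definition adjoint_resolvent :: "real \<Rightarrow> 'd bmat" where
  "adjoint_resolvent s i j = (\<Sum>k. adjoint_picard k s i j)"

lemma adjoint_picard_le:
  assumes "s \<in> {0..T}" "i \<in> {1..n}" "j \<in> {1..n}"
  shows "norm (adjoint_picard k s i j) \<le> norm (mat 1 :: real^'d^'d) * (n * L * T) ^ k / fact k"
proof -
  have "norm (adjoint_picard k s i j) \<le> norm (mat 1 :: real^'d^'d) * (n * L * (T - s)) ^ k / fact k"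
    using adjoint_picard_bounded[OF assms] .
  also have "\<dots> \<le> norm (mat 1 :: real^'d^'d) * (n * L * T) ^ k / fact k"
    using assms L_nonneg by (intro divide_right_mono mult_left_mono power_mono) auto
  finally show ?thesis .
qed

lemma sums_adjoint_picard_bound:
  "(\<lambda>k. norm (mat 1 :: real^'d^'d) * (n * L * T) ^ k / fact k)
     sums (norm (mat 1 :: real^'d^'d) * exp (n * L * T))"
  using sums_mult[OF exp_converges[of "n * L * T"], of "norm (mat 1 :: real^'d^'d)"]
  by (simp add: divide_inverse_commute mult.left_commute)

lemma norm_adjoint_picard_partial_sum_le:
  assumes "s \<in> {0..T}" "i \<in> {1..n}" "j \<in> {1..n}"
  shows "norm (\<Sum>k<N. adjoint_picard k s i j) \<le> norm (mat 1 :: real^'d^'d) * exp (n * L * T)"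
proof -
  have "norm (\<Sum>k<N. adjoint_picard k s i j) \<le> (\<Sum>k<N. norm (mat 1 :: real^'d^'d) * (n * L * T) ^ k / fact k)"
    by (intro order_trans[OF norm_sum] sum_mono adjoint_picard_le assms)
  also have "\<dots> \<le> norm (mat 1 :: real^'d^'d) * exp (n * L * T)"
    using L_nonneg T_nonneg
    by (intro sum_le_suminf[OF sums_summable[OF sums_adjoint_picard_bound], unfolded
          sums_unique[OF sums_adjoint_picard_bound, symmetric]]) auto
  finally show ?thesis .
qed

lemma adjoint_picard_sums:
  assumes "s \<in> {0..T}" "i \<in> {1..n}" "j \<in> {1..n}"
  shows "(\<lambda>k. adjoint_picard k s i j) sums adjoint_resolvent s i j"
  unfolding adjoint_resolvent_def
  by (intro summable_sums summable_comparison_test'[OF sums_summable[OF sums_adjoint_picard_bound]]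
      adjoint_picard_le assms)

lemma adjoint_resolvent_bounded:
  assumes "s \<in> {0..T}" "i \<in> {1..n}" "j \<in> {1..n}"
  shows "norm (adjoint_resolvent s i j) \<le> norm (mat 1 :: real^'d^'d) * exp (n * L * T)"
  using norm_adjoint_picard_partial_sum_le[OF assms]
  by (intro tendsto_le[OF _ tendsto_const tendsto_norm[OF adjoint_picard_sums[OF assms,
          unfolded sums_def]]]) auto

lemma adjoint_picard_partial_sum_equation:
  assumes s: "s \<in> {0..T}" and ij: "i \<in> {1..n}" "j \<in> {1..n}"
  shows "((\<lambda>r. bmul n (\<lambda>i l. \<Sum>k<N. adjoint_picard k r i l) (A r) i j) has_integral
           (\<Sum>k<Suc N. adjoint_picard k s i j) - bid i j) {s..T}"
proof -
  have "((\<lambda>r. \<Sum>k<N. bmul n (adjoint_picard k r) (A r) i j) has_integral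
      (\<Sum>k<N. adjoint_picard (Suc k) s i j)) {s..T}"
    using integrable_adjoint_picard_coefficient[OF assms]
    by (auto intro!: has_integral_sum integrable_integral)
  moreover have "(\<Sum>k<N. bmul n (adjoint_picard k r) (A r) i j)
      = bmul n (\<lambda>i l. \<Sum>k<N. adjoint_picard k r i l) (A r) i j" for r
    unfolding bmul_def by (simp add: matrix_mult.sum_left) (subst sum.swap, rule refl)
  ultimately show ?thesis
    unfolding sum.lessThan_Suc_shift by simp
qed

lemma adjoint_resolvent_equation:
  assumes s: "s \<in> {0..T}" and ij: "i \<in> {1..n}" "j \<in> {1..n}"
  shows "((\<lambda>r. bmul n (adjoint_resolvent r) (A r) i j) has_integral adjoint_resolvent s i j - bid i j) {s..T}"
proof -
  define f where "f N r = bmul n (\<lambda>i l. \<Sum>k<N. adjoint_picard k r i l) (A r) i j" for N r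
  have f_integrable: "f N integrable_on {s..T}" for N
    using adjoint_picard_partial_sum_equation[OF assms] unfolding f_def by blast
  have f_bounded: "norm (f N r) \<le> n * L * (norm (mat 1 :: real^'d^'d) * exp (n * L * T))"
    if "r \<in> {s..T}" for N r
    unfolding f_def using that s
    by (intro norm_bmul_coefficient_le(1)[OF _ ij] norm_adjoint_picard_partial_sum_le[OF _ ij(1)]) auto
  have f_tendsto: "(\<lambda>N. f N r) \<longlonglongrightarrow> bmul n (adjoint_resolvent r) (A r) i j" if "r \<in> {s..T}" for r
    unfolding f_def bmul_def using that s ij
    by (intro tendsto_sum matrix_mult.tendsto tendsto_const adjoint_picard_sums[unfolded sums_def]) auto
  note dominated = dominated_convergence[OF f_integrable integrable_const_ivl f_bounded f_tendsto]
  have "(\<lambda>N. integral {s..T} (f N)) \<longlonglongrightarrow> adjoint_resolvent s i j - bid i j"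
    unfolding f_def integral_unique[OF adjoint_picard_partial_sum_equation[OF assms]]
    by (intro tendsto_diff tendsto_const LIMSEQ_Suc[OF adjoint_picard_sums[OF s ij, unfolded sums_def]])
  then have "integral {s..T} (\<lambda>r. bmul n (adjoint_resolvent r) (A r) i j) = adjoint_resolvent s i j - bid i j"
    using dominated(2) by (rule LIMSEQ_unique[rotated])
  with integrable_integral[OF dominated(1)] show ?thesis by simp
qed

lemma adjoint_resolvent_at_T:
  assumes "i \<in> {1..n}" "j \<in> {1..n}"
  shows "adjoint_resolvent T i j = bid i j"
proof -
  have "((\<lambda>r. bmul n (adjoint_resolvent r) (A r) i j) has_integral adjoint_resolvent T i j - bid i j) {T}"
    using adjoint_resolvent_equation[of T i j] T_nonneg assms by simp
  then have "adjoint_resolvent T i j - bid i j = 0"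
    by (rule has_integral_unique[OF _ has_integral_refl(2)])
  then show ?thesis by simp
qed

lemma adjoint_resolvent_backward_solution:
  "backward_solution n T adjoint_resolvent (\<lambda>r i j. - bmul n (adjoint_resolvent r) (A r) i j)"
  unfolding backward_solution_def
  using has_integral_neg[OF adjoint_resolvent_equation] adjoint_resolvent_at_T by simp

end

section \<open>Inverse and decay of the resolvent\<close>

locale block_resolvent = bounded_block_coefficients n T L A
  for n :: nat and T L :: real and A :: "real \<Rightarrow> 'd::finite bmat" +
  fixes R :: "real \<Rightarrow> 'd bmat"
  assumes resolvent: "\<And>s i j. s \<in> {0..T} \<Longrightarrow> i \<in> {1..n} \<Longrightarrow> j \<in> {1..n} \<Longrightarrow>
    ((\<lambda>r. bmul n (A r) (R r) i j) has_integral bid i j - R s i j) {s..T}"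
begin

lemma resolvent_at_T:
  assumes "i \<in> {1..n}" "j \<in> {1..n}"
  shows "R T i j = bid i j"
proof -
  have "((\<lambda>r. bmul n (A r) (R r) i j) has_integral bid i j - R T i j) {T}"
    using resolvent[of T i j] T_nonneg assms by simp
  then have "bid i j - R T i j = 0"
    by (rule has_integral_unique[OF _ has_integral_refl(2)])
  then show ?thesis by simp
qed

lemma resolvent_backward_solution: "backward_solution n T R (\<lambda>r. bmul n (A r) (R r))"
  unfolding backward_solution_def using resolvent resolvent_at_T by simp

lemma resolvent_bounded: "\<exists>K\<ge>0. \<forall>s\<in>{0..T}. \<forall>i\<in>{1..n}. \<forall>j\<in>{1..n}. norm (R s i j) \<le> K"
proof -
  obtain K where "\<forall>s\<in>{0..T}. \<forall>i\<in>{1..n}. \<forall>j\<in>{1..n}. norm (R s i j) \<le> K"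
    using block_continuous_on_bounded[OF backward_solution_continuous[OF resolvent_backward_solution]]
    by blast
  then show ?thesis by (intro exI[of _ "max K 0"]) (auto intro: max.coboundedI1)
qed

abbreviation "S \<equiv> adjoint_resolvent"

lemma product_rule_bounds:
  obtains M where "0 \<le> M"
    "\<And>r i j. r \<in> {0..T} \<Longrightarrow> i \<in> {1..n} \<Longrightarrow> j \<in> {1..n} \<Longrightarrow> norm (bmul n (A r) (R r) i j) \<le> M"
    "\<And>r i j. r \<in> {0..T} \<Longrightarrow> i \<in> {1..n} \<Longrightarrow> j \<in> {1..n} \<Longrightarrow> norm (- bmul n (S r) (A r) i j) \<le> M"
proof -
  obtain K where K: "0 \<le> K" "\<And>s i j. s \<in> {0..T} \<Longrightarrow> i \<in> {1..n} \<Longrightarrow> j \<in> {1..n} \<Longrightarrow> norm (R s i j) \<le> K"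
    using resolvent_bounded by blast
  define M where "M = n * L * (K + norm (mat 1 :: real^'d^'d) * exp (n * L * T))"
  show ?thesis
  proof
    show "0 \<le> M" unfolding M_def using K(1) L_nonneg by simp
    fix r i j assume rij: "r \<in> {0..T}" "i \<in> {1..n}" "j \<in> {1..n}"
    have "norm (bmul n (A r) (R r) i j) \<le> n * L * K"
      using K(2) rij by (intro norm_bmul_coefficient_le(2)) auto
    moreover have "norm (bmul n (S r) (A r) i j) \<le> n * L * (norm (mat 1 :: real^'d^'d) * exp (n * L * T))"
      using adjoint_resolvent_bounded rij by (intro norm_bmul_coefficient_le(1)) auto
    moreover have "0 \<le> n * L * K" "0 \<le> n * L * (norm (mat 1 :: real^'d^'d) * exp (n * L * T))"
      using L_nonneg K(1) by simp_all
    ultimately show "norm (bmul n (A r) (R r) i j) \<le> M" "norm (- bmul n (S r) (A r) i j) \<le> M"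
      unfolding M_def distrib_left norm_minus_cancel by linarith+
  qed
qed

lemma adjoint_resolvent_mult_resolvent:
  assumes s: "s \<in> {0..T}" and ij: "i \<in> {1..n}" "j \<in> {1..n}"
  shows "bmul n (S s) (R s) i j = bid i j"
proof -
  obtain M where M: "0 \<le> M"
    "\<And>r i j. r \<in> {0..T} \<Longrightarrow> i \<in> {1..n} \<Longrightarrow> j \<in> {1..n} \<Longrightarrow> norm (bmul n (A r) (R r) i j) \<le> M"
    "\<And>r i j. r \<in> {0..T} \<Longrightarrow> i \<in> {1..n} \<Longrightarrow> j \<in> {1..n} \<Longrightarrow> norm (- bmul n (S r) (A r) i j) \<le> M"
    using product_rule_bounds by blast
  have cancel: "bmul n (\<lambda>i j. - bmul n (S r) (A r) i j) (R r) i j + bmul n (S r) (bmul n (A r) (R r)) i j = 0"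
    for r i j by (simp add: bmul_uminus_left bmul_assoc)
  have "backward_solution n T (\<lambda>s. bmul n (S s) (R s))
      (\<lambda>r i j. bmul n (\<lambda>i j. - bmul n (S r) (A r) i j) (R r) i j + bmul n (S r) (bmul n (A r) (R r)) i j)"
    by (rule backward_solution_bmul[OF adjoint_resolvent_backward_solution resolvent_backward_solution
          M(1,3,2)])
      (simp_all add: cancel integrable_0)
  then have "((\<lambda>r. 0) has_integral bmul n (S T) (R T) i j - bmul n (S s) (R s) i j) {s..T}"
    using s ij unfolding backward_solution_def cancel by blast
  then have "bmul n (S s) (R s) i j = bmul n (S T) (R T) i j"
    using has_integral_unique[OF _ has_integral_0] by fastforce
  also have "\<dots> = bid i j"
    by (rule bmul_eq_bid[OF adjoint_resolvent_at_T resolvent_at_T ij])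
  finally show ?thesis .
qed

definition right_inverse_defect :: "real \<Rightarrow> 'd bmat" where
  "right_inverse_defect s i j = bmul n (R s) (S s) i j - bid i j"

lemma right_inverse_defect_backward_solution:
  "backward_solution n T right_inverse_defect
     (\<lambda>r i j. bmul n (A r) (right_inverse_defect r) i j - bmul n (right_inverse_defect r) (A r) i j)"
proof -
  obtain M where M: "0 \<le> M"
    "\<And>r i j. r \<in> {0..T} \<Longrightarrow> i \<in> {1..n} \<Longrightarrow> j \<in> {1..n} \<Longrightarrow> norm (bmul n (A r) (R r) i j) \<le> M"
    "\<And>r i j. r \<in> {0..T} \<Longrightarrow> i \<in> {1..n} \<Longrightarrow> j \<in> {1..n} \<Longrightarrow> norm (- bmul n (S r) (A r) i j) \<le> M"
    using product_rule_bounds by blast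
  let ?D = right_inverse_defect
  have commutator: "bmul n (bmul n (A r) (R r)) (S r) i j + bmul n (R r) (\<lambda>i j. - bmul n (S r) (A r) i j) i j
      = bmul n (A r) (?D r) i j - bmul n (?D r) (A r) i j" if ij: "i \<in> {1..n}" "j \<in> {1..n}" for r i j
    unfolding right_inverse_defect_def bmul_diff_left bmul_diff_right bmul_bid_left[OF ij(1)]
      bmul_bid_right[OF ij(2)] bmul_uminus_right bmul_assoc by simp
  have "block_continuous_on n {0..T} ?D"
    using block_continuous_on_bmul[OF backward_solution_continuous[OF resolvent_backward_solution]
        backward_solution_continuous[OF adjoint_resolvent_backward_solution]]
    unfolding right_inverse_defect_def block_continuous_on_def by (auto intro: continuous_intros)
  then have "backward_solution n T (\<lambda>s. bmul n (R s) (S s))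
      (\<lambda>r i j. bmul n (bmul n (A r) (R r)) (S r) i j + bmul n (R r) (\<lambda>i j. - bmul n (S r) (A r) i j) i j)"
    using commutator
    by (intro backward_solution_bmul[OF resolvent_backward_solution adjoint_resolvent_backward_solution M])
      (auto intro!: integrable_diff integrable_bmul_coefficient)
  then show ?thesis
    by (rule backward_solution_shift) (simp_all add: right_inverse_defect_def commutator)
qed

lemma resolvent_mult_adjoint_resolvent:
  assumes s: "s \<in> {0..T}" and ij: "i \<in> {1..n}" "j \<in> {1..n}"
  shows "bmul n (R s) (S s) i j = bid i j"
proof -
  have "right_inverse_defect s i j = 0"
  proof (rule backward_solution_zero[OF right_inverse_defect_backward_solution _ _ _ s ij])
    show "right_inverse_defect T i j = 0" if "i \<in> {1..n}" "j \<in> {1..n}" for i j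
      using bmul_eq_bid[OF resolvent_at_T adjoint_resolvent_at_T that]
      by (simp add: right_inverse_defect_def)
    show "0 \<le> 2 * real n * L" using L_nonneg by simp
    fix r i j assume rij: "r \<in> {0..T}" "i \<in> {1..n}" "j \<in> {1..n}"
    let ?D = "right_inverse_defect r"
    have "norm (bmul n (A r) ?D i j) \<le> n * L * bnorm n ?D" "norm (bmul n ?D (A r) i j) \<le> n * L * bnorm n ?D"
      using rij norm_block_le_bnorm by (intro norm_bmul_coefficient_le; auto)+
    then show "norm (bmul n (A r) ?D i j - bmul n ?D (A r) i j) \<le> 2 * real n * L * bnorm n ?D"
      using norm_triangle_ineq4[of "bmul n (A r) ?D i j" "bmul n ?D (A r) i j"] by simp
  qed
  then show ?thesis by (simp add: right_inverse_defect_def)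
qed

end

locale hessenberg_block_resolvent = block_resolvent +
  assumes A_hessenberg: "\<And>s i j. s \<in> {0..T} \<Longrightarrow> i \<in> {1..n} \<Longrightarrow> j \<in> {1..n} \<Longrightarrow> j + 1 < i \<Longrightarrow> A s i j = 0"
begin

lemma norm_bmul_hessenberg_le:
  assumes r: "r \<in> {0..T}" and ij: "i \<in> {1..n}" "j \<in> {1..n}" and B: "0 \<le> B"
  shows "(\<And>k. k \<in> {1..n} \<Longrightarrow> i \<le> k + 1 \<Longrightarrow> norm (X k j) \<le> B) \<Longrightarrow> norm (bmul n (A r) X i j) \<le> n * L * B"
    and "(\<And>k. k \<in> {1..n} \<Longrightarrow> k \<le> j + 1 \<Longrightarrow> norm (X i k) \<le> B) \<Longrightarrow> norm (bmul n X (A r) i j) \<le> n * L * B"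
proof -
  assume X: "\<And>k. k \<in> {1..n} \<Longrightarrow> i \<le> k + 1 \<Longrightarrow> norm (X k j) \<le> B"
  have "norm (A r i k) * norm (X k j) \<le> L * B" if k: "k \<in> {1..n}" for k
  proof (cases "i \<le> k + 1")
    case True
    then show ?thesis using A_bounded[OF r ij(1) k] X[OF k] L_nonneg by (intro mult_mono) auto
  qed (use A_hessenberg[OF r ij(1) k] L_nonneg B in auto)
  then have "norm (bmul n (A r) X i j) \<le> (\<Sum>k\<in>{1..n}. L * B)"
    by (intro order_trans[OF norm_bmul_le] sum_mono)
  then show "norm (bmul n (A r) X i j) \<le> n * L * B" by (simp add: mult_ac)
next
  assume X: "\<And>k. k \<in> {1..n} \<Longrightarrow> k \<le> j + 1 \<Longrightarrow> norm (X i k) \<le> B"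
  have "norm (X i k) * norm (A r k j) \<le> B * L" if k: "k \<in> {1..n}" for k
  proof (cases "k \<le> j + 1")
    case True
    then show ?thesis using A_bounded[OF r k ij(2)] X[OF k] B by (intro mult_mono) auto
  qed (use A_hessenberg[OF r k ij(2)] L_nonneg B in auto)
  then have "norm (bmul n X (A r) i j) \<le> (\<Sum>k\<in>{1..n}. B * L)"
    by (intro order_trans[OF norm_bmul_le] sum_mono)
  then show "norm (bmul n X (A r) i j) \<le> n * L * B" by (simp add: mult_ac)
qed

lemma resolvent_decay: "\<exists>K. \<forall>s\<in>{0..T}. \<forall>i\<in>{1..n}. \<forall>j\<in>{1..n}. norm (R s i j) \<le> K * (T - s) ^ (i - j)"
proof -
  obtain K0 where K0: "\<And>s i j. s \<in> {0..T} \<Longrightarrow> i \<in> {1..n} \<Longrightarrow> j \<in> {1..n} \<Longrightarrow> norm (R s i j) \<le> K0"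
    using resolvent_bounded by blast
  show ?thesis
  proof (rule offdiagonal_decay[where L = "n * L", OF K0])
    fix s i j B assume s: "s \<in> {0..T}" and ij: "i \<in> {1..n}" "j \<in> {1..n}" and "j < i"
      and B: "\<And>r a b. r \<in> {s..T} \<Longrightarrow> a \<in> {1..n} \<Longrightarrow> b \<in> {1..n} \<Longrightarrow> i + b \<le> a + j + 1 \<Longrightarrow> norm (R r a b) \<le> B"
    have "((\<lambda>r. - bmul n (A r) (R r) i j) has_integral R s i j) {s..T}"
      using has_integral_neg[OF resolvent[OF s ij]] \<open>j < i\<close> by (simp add: bid_def)
    then show "norm (R s i j) \<le> n * L * B * (T - s)"
    proof (rule has_integral_norm_le_length)
      show "s \<le> T" using s by simp
      fix r assume r: "r \<in> {s..T}"
      have "0 \<le> B" using B[OF _ ij, of s] s by (auto intro: order_trans[OF norm_ge_zero])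
      then show "norm (- bmul n (A r) (R r) i j) \<le> n * L * B"
        using r s ij B by (auto intro!: norm_bmul_hessenberg_le(1))
    qed
  qed
qed

lemma adjoint_resolvent_decay: "\<exists>K. \<forall>s\<in>{0..T}. \<forall>i\<in>{1..n}. \<forall>j\<in>{1..n}. norm (S s i j) \<le> K * (T - s) ^ (i - j)"
proof (rule offdiagonal_decay[where L = "n * L", OF adjoint_resolvent_bounded])
  fix s i j B assume s: "s \<in> {0..T}" and ij: "i \<in> {1..n}" "j \<in> {1..n}" and "j < i"
    and B: "\<And>r a b. r \<in> {s..T} \<Longrightarrow> a \<in> {1..n} \<Longrightarrow> b \<in> {1..n} \<Longrightarrow> i + b \<le> a + j + 1 \<Longrightarrow> norm (S r a b) \<le> B"
  have "((\<lambda>r. bmul n (S r) (A r) i j) has_integral S s i j) {s..T}"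
    using adjoint_resolvent_equation[OF s ij] \<open>j < i\<close> by (simp add: bid_def)
  then show "norm (S s i j) \<le> n * L * B * (T - s)"
  proof (rule has_integral_norm_le_length)
    show "s \<le> T" using s by simp
    fix r assume r: "r \<in> {s..T}"
    have "0 \<le> B" using B[OF _ ij, of s] s by (auto intro: order_trans[OF norm_ge_zero])
    then show "norm (bmul n (S r) (A r) i j) \<le> n * L * B"
      using r s ij B by (auto intro!: norm_bmul_hessenberg_le(2))
  qed
qed

end

section \<open>Rescaling\<close>

text \<open>\<open>bscale \<tau> X\<close> is \<open>(Tscale \<alpha> \<tau>)\<^sup>-\<^sup>1 X (Tscale \<alpha> \<tau>)\<close>, which does not depend on \<open>\<alpha>\<close>.\<close>

definition bscale :: "real \<Rightarrow> 'd::finite bmat \<Rightarrow> 'd bmat" where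
  "bscale \<tau> X = (\<lambda>i j. (\<tau> powr (real j - real i)) *\<^sub>R X i j)"

lemma Tscale_conjugate_bscale:
  assumes \<tau>: "0 < \<tau>" and ij: "i \<in> {1..n}" "j \<in> {1..n}"
  shows "bmul n (Tscale \<alpha> \<tau>) (bmul n (bscale \<tau> X) (Tscale_inv \<alpha> \<tau>)) i j = X i j"
proof -
  have left: "bmul n (Tscale \<alpha> \<tau>) Y i j = (\<tau> powr (real i - 1 + 1 / \<alpha>)) *\<^sub>R Y i j" for Y :: "'a::finite bmat"
  proof -
    have "bmul n (Tscale \<alpha> \<tau>) Y i j = (\<Sum>k\<in>{1..n}. if i = k then (\<tau> powr (real i - 1 + 1 / \<alpha>)) *\<^sub>R Y k j else 0)"
      unfolding bmul_def Tscale_def by (intro sum.cong) (auto simp: scalar_matrix_assoc[symmetric])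
    then show ?thesis using ij by simp
  qed
  have right: "bmul n Y (Tscale_inv \<alpha> \<tau>) i j = (\<tau> powr (- (real j - 1 + 1 / \<alpha>))) *\<^sub>R Y i j" for Y :: "'a::finite bmat"
  proof -
    have "bmul n Y (Tscale_inv \<alpha> \<tau>) i j = (\<Sum>k\<in>{1..n}. if k = j then (\<tau> powr (- (real j - 1 + 1 / \<alpha>))) *\<^sub>R Y i k else 0)"
      unfolding bmul_def Tscale_inv_def by (intro sum.cong) (auto simp: matrix_scalar_ac)
    then show ?thesis using ij by simp
  qed
  have "\<tau> powr (real i - 1 + 1 / \<alpha>) * (\<tau> powr (- (real j - 1 + 1 / \<alpha>)) * \<tau> powr (real j - real i)) = 1"
    using \<tau> by (simp add: powr_add[symmetric])
  then show ?thesis by (simp add: left right bscale_def)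
qed

lemma bmul_bscale:
  assumes \<tau>: "0 < \<tau>"
  shows "bmul n (bscale \<tau> X) (bscale \<tau> Y) i j = bscale \<tau> (bmul n X Y) i j"
proof -
  have "\<tau> powr (real k - real i) * \<tau> powr (real j - real k) = \<tau> powr (real j - real i)" for k
    using \<tau> by (simp add: powr_add[symmetric])
  then show ?thesis
    by (simp add: bmul_def bscale_def scaleR_sum_right matrix_scalar_ac scalar_matrix_assoc[symmetric]
        mult.commute)
qed

lemma bscale_bid: "0 < \<tau> \<Longrightarrow> bscale \<tau> bid i j = bid i j"
  by (simp add: bscale_def bid_def)

lemma beq_bmul_bscale_bid:
  assumes "0 < \<tau>" "\<And>i j. i \<in> {1..n} \<Longrightarrow> j \<in> {1..n} \<Longrightarrow> bmul n X Y i j = bid i j"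
  shows "beq n (bmul n (bscale \<tau> X) (bscale \<tau> Y)) bid"
proof -
  have "bscale \<tau> (bmul n X Y) i j = bid i j" if "i \<in> {1..n}" "j \<in> {1..n}" for i j
    using assms(2)[OF that] bscale_bid[OF assms(1), of i j] by (simp add: bscale_def)
  then show ?thesis by (simp add: beq_def bmul_bscale[OF assms(1)])
qed

lemma norm_bscale_le:
  assumes \<tau>: "0 < \<tau>" "\<tau> \<le> T" and s: "T - \<tau> \<le> s" "s \<le> T"
    and X: "norm X \<le> K * (T - s) ^ (i - j)" and j: "j \<le> n"
  shows "norm ((\<tau> powr (real j - real i)) *\<^sub>R X) \<le> \<bar>K\<bar> * (1 + T) ^ n"
proof -
  have "K * (T - s) ^ (i - j) \<le> \<bar>K\<bar> * (T - s) ^ (i - j)"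
    using s by (intro mult_right_mono) auto
  then have "norm ((\<tau> powr (real j - real i)) *\<^sub>R X) \<le> \<tau> powr (real j - real i) * (\<bar>K\<bar> * (T - s) ^ (i - j))"
    using X by (auto intro: mult_left_mono)
  also have "\<dots> = \<bar>K\<bar> * (\<tau> powr (real j - real i) * (T - s) ^ (i - j))"
    by (simp add: mult_ac)
  also have "\<dots> \<le> \<bar>K\<bar> * (1 + T) ^ n"
  proof (intro mult_left_mono abs_ge_zero)
    show "\<tau> powr (real j - real i) * (T - s) ^ (i - j) \<le> (1 + T) ^ n"
    proof (cases "j \<le> i")
      case True
      have "\<tau> powr (real j - real i) * (T - s) ^ (i - j) \<le> \<tau> powr (real j - real i) * \<tau> ^ (i - j)"
        using s by (intro mult_left_mono power_mono) auto
      also have "\<dots> = 1"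
        using \<tau> True by (simp add: powr_realpow[symmetric] powr_add[symmetric] of_nat_diff)
      also have "\<dots> \<le> (1 + T) ^ n" using \<tau> by simp
      finally show ?thesis .
    next
      case False
      have "\<tau> powr (real j - real i) * (T - s) ^ (i - j) = \<tau> ^ (j - i)"
        using \<tau> False by (simp add: powr_realpow[symmetric] of_nat_diff)
      also have "\<dots> \<le> (1 + T) ^ (j - i)" using \<tau> by (intro power_mono) auto
      also have "\<dots> \<le> (1 + T) ^ n" using \<tau> j by (intro power_increasing) auto
      finally show ?thesis .
    qed
  qed
  finally show ?thesis .
qed

lemma rescaled_inverse_pair:
  fixes R S :: "real \<Rightarrow> 'd::finite bmat"
  assumes T: "0 < T"
    and RS: "\<And>s i j. s \<in> {0..T} \<Longrightarrow> i \<in> {1..n} \<Longrightarrow> j \<in> {1..n} \<Longrightarrow> bmul n (R s) (S s) i j = bid i j"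
    and SR: "\<And>s i j. s \<in> {0..T} \<Longrightarrow> i \<in> {1..n} \<Longrightarrow> j \<in> {1..n} \<Longrightarrow> bmul n (S s) (R s) i j = bid i j"
    and R_decay: "\<forall>s\<in>{0..T}. \<forall>i\<in>{1..n}. \<forall>j\<in>{1..n}. norm (R s i j) \<le> KR * (T - s) ^ (i - j)"
    and S_decay: "\<forall>s\<in>{0..T}. \<forall>i\<in>{1..n}. \<forall>j\<in>{1..n}. norm (S s i j) \<le> KS * (T - s) ^ (i - j)"
  shows "\<exists>C. \<forall>t\<in>{0..<T}. \<exists>Rh :: real \<Rightarrow> 'd bmat.
           (\<forall>s\<in>{t..T}. beq n (R s)
               (bmul n (Tscale \<alpha> (T - t)) (bmul n (Rh ((s - t) / (T - t))) (Tscale_inv \<alpha> (T - t))))) \<and>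
           (\<forall>u\<in>{0..1}. (\<forall>i\<in>{1..n}. \<forall>j\<in>{1..n}. norm (Rh u i j) \<le> C) \<and>
              (\<exists>Q :: 'd bmat. beq n (bmul n (Rh u) Q) bid \<and> beq n (bmul n Q (Rh u)) bid \<and>
                 (\<forall>i\<in>{1..n}. \<forall>j\<in>{1..n}. norm (Q i j) \<le> C)))"
proof (intro exI[of _ "(\<bar>KR\<bar> + \<bar>KS\<bar>) * (1 + T) ^ n"] ballI)
  let ?C = "(\<bar>KR\<bar> + \<bar>KS\<bar>) * (1 + T) ^ n"
  fix t assume t: "t \<in> {0..<T}"
  define \<tau> where "\<tau> = T - t"
  have \<tau>: "0 < \<tau>" "\<tau> \<le> T" using t by (auto simp: \<tau>_def)
  have time: "t + u * \<tau> \<in> {0..T}" "T - \<tau> \<le> t + u * \<tau>" "t + u * \<tau> \<le> T" if "u \<in> {0..1}" for u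
  proof -
    have "u * \<tau> \<le> \<tau>" "0 \<le> u * \<tau>" using that \<tau> mult_left_le_one_le[of \<tau> u] by auto
    then show "t + u * \<tau> \<in> {0..T}" "T - \<tau> \<le> t + u * \<tau>" "t + u * \<tau> \<le> T"
      using t unfolding atLeastAtMost_iff atLeastLessThan_iff \<tau>_def by linarith+
  qed
  have scaled_le: "norm (bscale \<tau> (X (t + u * \<tau>)) i j) \<le> \<bar>K\<bar> * (1 + T) ^ n"
    if "\<forall>s\<in>{0..T}. \<forall>i\<in>{1..n}. \<forall>j\<in>{1..n}. norm (X s i j) \<le> K * (T - s) ^ (i - j)"
      "u \<in> {0..1}" "i \<in> {1..n}" "j \<in> {1..n}" for X :: "real \<Rightarrow> 'd bmat" and K u i j
    unfolding bscale_def using that time[OF that(2)] by (intro norm_bscale_le[OF \<tau>]) auto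
  have C: "\<bar>KR\<bar> * (1 + T) ^ n \<le> ?C" "\<bar>KS\<bar> * (1 + T) ^ n \<le> ?C"
    using T by (simp_all add: distrib_right)
  let ?Rh = "\<lambda>u. bscale \<tau> (R (t + u * \<tau>))"
  show "\<exists>Rh :: real \<Rightarrow> 'd bmat.
           (\<forall>s\<in>{t..T}. beq n (R s)
               (bmul n (Tscale \<alpha> (T - t)) (bmul n (Rh ((s - t) / (T - t))) (Tscale_inv \<alpha> (T - t))))) \<and>
           (\<forall>u\<in>{0..1}. (\<forall>i\<in>{1..n}. \<forall>j\<in>{1..n}. norm (Rh u i j) \<le> ?C) \<and>
              (\<exists>Q :: 'd bmat. beq n (bmul n (Rh u) Q) bid \<and> beq n (bmul n Q (Rh u)) bid \<and>
                 (\<forall>i\<in>{1..n}. \<forall>j\<in>{1..n}. norm (Q i j) \<le> ?C)))"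
    unfolding \<tau>_def[symmetric]
  proof (intro exI[of _ ?Rh] conjI ballI)
    fix s assume "s \<in> {t..T}"
    have "t + (s - t) / \<tau> * \<tau> = s" using \<tau> by simp
    then show "beq n (R s) (bmul n (Tscale \<alpha> \<tau>) (bmul n (?Rh ((s - t) / \<tau>)) (Tscale_inv \<alpha> \<tau>)))"
      unfolding beq_def using Tscale_conjugate_bscale[OF \<tau>(1), of _ n _ \<alpha> "R s"] by simp
  next
    fix u :: real assume u: "u \<in> {0..1}"
    show "norm (?Rh u i j) \<le> ?C" if "i \<in> {1..n}" "j \<in> {1..n}" for i j
      using scaled_le[OF R_decay u that] C(1) by linarith
    have "norm (bscale \<tau> (S (t + u * \<tau>)) i j) \<le> ?C" if "i \<in> {1..n}" "j \<in> {1..n}" for i j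
      using scaled_le[OF S_decay u that] C(2) by linarith
    then show "\<exists>Q :: 'd bmat. beq n (bmul n (?Rh u) Q) bid \<and> beq n (bmul n Q (?Rh u)) bid \<and>
        (\<forall>i\<in>{1..n}. \<forall>j\<in>{1..n}. norm (Q i j) \<le> ?C)"
      using beq_bmul_bscale_bid[OF \<tau>(1) RS[OF time(1)[OF u]]] beq_bmul_bscale_bid[OF \<tau>(1) SR[OF time(1)[OF u]]]
      by blast
  qed
qed

theorem lemma5p2:
  fixes A R :: "real \<Rightarrow> 'd::finite bmat"
    and n :: nat and \<alpha> \<alpha>l \<alpha>u T :: real
  assumes n: "n \<ge> 1"
    and alpha: "0 < \<alpha>" "\<alpha> < 2"
    and T: "0 < T"
    and A_meas: "\<And>i j. (\<lambda>s. A s i j) \<in> borel_measurable lborel"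
    and A_struct: "\<And>s i j. s \<in> {0..T} \<Longrightarrow> i \<in> {1..n} \<Longrightarrow> j \<in> {1..n} \<Longrightarrow>
                     j + 1 < i \<Longrightarrow> A s i j = 0"
    and H3_ell: "\<And>s i \<xi>. s \<in> {0..T} \<Longrightarrow> i \<in> {2..n} \<Longrightarrow>
                     \<alpha>l * (norm \<xi>)\<^sup>2 \<le> \<xi> \<bullet> (A s i (i - 1) *v \<xi>) \<and>
                     \<xi> \<bullet> (A s i (i - 1) *v \<xi>) \<le> \<alpha>u * (norm \<xi>)\<^sup>2"
    and H3_bd: "\<And>s i j. s \<in> {0..T} \<Longrightarrow> i \<in> {1..n} \<Longrightarrow> j \<in> {1..n} \<Longrightarrow>
                     onorm (\<lambda>x. A s i j *v x) \<le> \<alpha>u"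
    and resolvent: "\<And>s i j. s \<in> {0..T} \<Longrightarrow> i \<in> {1..n} \<Longrightarrow> j \<in> {1..n} \<Longrightarrow>
                     ((\<lambda>r. \<Sum>k\<in>{1..n}. A r i k ** R r k j) has_integral (bid i j - R s i j)) {s..T}"
  shows "\<exists>C. \<forall>t\<in>{0..<T}. \<exists>Rh :: real \<Rightarrow> 'd bmat.
           (\<forall>s\<in>{t..T}. beq n (R s)
               (bmul n (Tscale \<alpha> (T - t)) (bmul n (Rh ((s - t) / (T - t))) (Tscale_inv \<alpha> (T - t))))) \<and>
           (\<forall>u\<in>{0..1}. (\<forall>i\<in>{1..n}. \<forall>j\<in>{1..n}. norm (Rh u i j) \<le> C) \<and>
              (\<exists>Q :: 'd bmat. beq n (bmul n (Rh u) Q) bid \<and> beq n (bmul n Q (Rh u)) bid \<and>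
                 (\<forall>i\<in>{1..n}. \<forall>j\<in>{1..n}. norm (Q i j) \<le> C)))"
proof -
  define L where "L = real CARD('d) * real CARD('d) * \<alpha>u"
  have A_bounded: "norm (A s i j) \<le> L" if "s \<in> {0..T}" "i \<in> {1..n}" "j \<in> {1..n}" for s i j
  proof -
    have "norm (A s i j) \<le> real CARD('d) * real CARD('d) * onorm (\<lambda>x. A s i j *v x)"
      by (rule norm_matrix_le_onorm)
    also have "\<dots> \<le> L"
      unfolding L_def using H3_bd[OF that] by (intro mult_left_mono) auto
    finally show ?thesis .
  qed
  interpret hessenberg_block_resolvent n T L A R
  proof
    show "0 \<le> T" using T by simp
    show "0 \<le> L" using A_bounded[of 0 1 1] n T by (auto intro: order_trans[OF norm_ge_zero])
    show "((\<lambda>r. bmul n (A r) (R r) i j) has_integral bid i j - R s i j) {s..T}"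
      if "s \<in> {0..T}" "i \<in> {1..n}" "j \<in> {1..n}" for s i j
      using resolvent[OF that] unfolding bmul_def .
  qed (use A_meas A_bounded A_struct in auto)
  obtain KR KS where decay:
    "\<forall>s\<in>{0..T}. \<forall>i\<in>{1..n}. \<forall>j\<in>{1..n}. norm (R s i j) \<le> KR * (T - s) ^ (i - j)"
    "\<forall>s\<in>{0..T}. \<forall>i\<in>{1..n}. \<forall>j\<in>{1..n}. norm (S s i j) \<le> KS * (T - s) ^ (i - j)"
    using resolvent_decay adjoint_resolvent_decay by blast
  show ?thesis
    using rescaled_inverse_pair[OF T resolvent_mult_adjoint_resolvent adjoint_resolvent_mult_resolvent decay]
    by blast
qed

end
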